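(* For every $\rho>0$ there exists $\epsilon>0$ such that for all $x=x_0+x_1\mathbf e_1+x_2\mathbf e_2+x_3\mathbf e_3\in\mathbb H$ with $x_0^2+x_j^2<\epsilon$ for $j=1,2,3$, one has $|P_n(x)|<\rho^n$ for every $n\in\mathbb N$.
   Context: For $m\ge0$, $T^m_j=\frac{2(m-j+1)}{(m+1)(m+2)}$ ($0\le j\le m$), $c_m=\sum_{j=0}^m(-1)^jT^m_j$, and $P_m(x)=\frac1{c_m}\sum_{j=0}^mT^m_jx^{m-j}\overline{x}^{\,j}$, where $\overline{x}=x_0-x_1\mathbf e_1-x_2\mathbf e_2-x_3\mathbf e_3$ is the quaternionic conjugate. *)

theory Defs
  imports Complex_Main
begin

text \<open>Real quaternions x = x0 + x1 e1 + x2 e2 + x3 e3, with e1^2 = e2^2 = e3^2 = -1,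
  e1 e2 = e3, e2 e3 = e1, e3 e1 = e2 (Hamilton product).\<close>

datatype quat = Quat (Re0: real) (Im1: real) (Im2: real) (Im3: real)

definition qmult :: "quat \<Rightarrow> quat \<Rightarrow> quat" where
  "qmult p q = Quat
     (Re0 p * Re0 q - Im1 p * Im1 q - Im2 p * Im2 q - Im3 p * Im3 q)
     (Re0 p * Im1 q + Im1 p * Re0 q + Im2 p * Im3 q - Im3 p * Im2 q)
     (Re0 p * Im2 q - Im1 p * Im3 q + Im2 p * Re0 q + Im3 p * Im1 q)
     (Re0 p * Im3 q + Im1 p * Im2 q - Im2 p * Im1 q + Im3 p * Re0 q)"

definition qone :: quat where "qone = Quat 1 0 0 0"
definition qzero :: quat where "qzero = Quat 0 0 0 0"

definition qadd :: "quat \<Rightarrow> quat \<Rightarrow> quat" where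
  "qadd p q = Quat (Re0 p + Re0 q) (Im1 p + Im1 q) (Im2 p + Im2 q) (Im3 p + Im3 q)"

definition qscale :: "real \<Rightarrow> quat \<Rightarrow> quat" where
  "qscale r q = Quat (r * Re0 q) (r * Im1 q) (r * Im2 q) (r * Im3 q)"

fun qpow :: "quat \<Rightarrow> nat \<Rightarrow> quat" where
  "qpow x 0 = qone"
| "qpow x (Suc n) = qmult (qpow x n) x"

definition qconj :: "quat \<Rightarrow> quat" where
  "qconj x = Quat (Re0 x) (- Im1 x) (- Im2 x) (- Im3 x)"

definition qnorm :: "quat \<Rightarrow> real" where
  "qnorm x = sqrt ((Re0 x)^2 + (Im1 x)^2 + (Im2 x)^2 + (Im3 x)^2)"

definition qsum :: "(nat \<Rightarrow> quat) \<Rightarrow> nat \<Rightarrow> quat" where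
  "qsum f m = foldr (\<lambda>j acc. qadd (f j) acc) [0..<Suc m] qzero"

definition T :: "nat \<Rightarrow> nat \<Rightarrow> real" where
  "T m j = 2 * (real m - real j + 1) / ((real m + 1) * (real m + 2))"

definition c :: "nat \<Rightarrow> real" where
  "c m = (\<Sum>j = 0..m. (-1) ^ j * T m j)"

definition P :: "nat \<Rightarrow> quat \<Rightarrow> quat" where
  "P m x = qscale (1 / c m)
     (qsum (\<lambda>j. qscale (T m j) (qmult (qpow x (m - j)) (qpow (qconj x) j))) m)"

end

theory Submission
  imports Defs "HOL-Analysis.Product_Vector"
begin

text \<open>The weights \<open>T n j\<close> are nonnegative and sum to 1, and every term
  \<open>x^(n-j) (conj x)^j\<close> has norm \<open>|x|^n\<close> because the quaternion norm is multiplicative and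
  invariant under conjugation; hence \<open>|P n x| \<le> |x|^n / c n\<close>. The alternating sum of
  \<open>n - j + 1\<close> is at least \<open>(n + 1) / 2\<close>, which gives \<open>1 / c n \<le> n + 2 \<le> 3^n\<close> and so
  \<open>|P n x| \<le> (3 |x|)^n\<close>. This is below \<open>\<rho>^n\<close> once \<open>|x| < \<rho> / 3\<close>, which \<open>\<epsilon> = (\<rho>/3)\<^sup>2 / 3\<close>
  ensures because \<open>|x|\<^sup>2\<close> is bounded by the sum of the three hypotheses.\<close>

definition quat_vec :: "quat \<Rightarrow> real \<times> real \<times> real \<times> real" where
  "quat_vec p = (Re0 p, Im1 p, Im2 p, Im3 p)"

lemma qnorm_eq_norm_quat_vec: "qnorm p = norm (quat_vec p)"
  by (simp add: qnorm_def quat_vec_def norm_Pair add.assoc)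

lemma qnorm_nonneg: "qnorm p \<ge> 0"
  by (simp add: qnorm_def)

lemma qnorm_qadd_le: "qnorm (qadd p q) \<le> qnorm p + qnorm q"
proof -
  have "quat_vec (qadd p q) = quat_vec p + quat_vec q"
    by (simp add: quat_vec_def qadd_def)
  then show ?thesis
    by (simp add: qnorm_eq_norm_quat_vec norm_triangle_ineq)
qed

lemma qnorm_qmult: "qnorm (qmult p q) = qnorm p * qnorm q"
proof -
  have "(Re0 (qmult p q))\<^sup>2 + (Im1 (qmult p q))\<^sup>2 + (Im2 (qmult p q))\<^sup>2 + (Im3 (qmult p q))\<^sup>2
    = ((Re0 p)\<^sup>2 + (Im1 p)\<^sup>2 + (Im2 p)\<^sup>2 + (Im3 p)\<^sup>2) * ((Re0 q)\<^sup>2 + (Im1 q)\<^sup>2 + (Im2 q)\<^sup>2 + (Im3 q)\<^sup>2)"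
    by (simp add: qmult_def power2_eq_square algebra_simps)
  then show ?thesis
    by (simp add: qnorm_def real_sqrt_mult)
qed

lemma qnorm_qpow: "qnorm (qpow x n) = qnorm x ^ n"
proof (induction n)
  case 0
  then show ?case by (simp add: qone_def qnorm_def)
next
  case (Suc n)
  then show ?case by (simp add: qnorm_qmult)
qed

lemma qnorm_qconj: "qnorm (qconj x) = qnorm x"
  by (simp add: qnorm_def qconj_def)

lemma qnorm_qscale: "qnorm (qscale r q) = \<bar>r\<bar> * qnorm q"
proof -
  have "(r * Re0 q)\<^sup>2 + (r * Im1 q)\<^sup>2 + (r * Im2 q)\<^sup>2 + (r * Im3 q)\<^sup>2
     = r\<^sup>2 * ((Re0 q)\<^sup>2 + (Im1 q)\<^sup>2 + (Im2 q)\<^sup>2 + (Im3 q)\<^sup>2)"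
    by (simp add: power_mult_distrib algebra_simps)
  then show ?thesis
    by (simp add: qnorm_def qscale_def real_sqrt_mult)
qed

lemma qnorm_qsum_le: "qnorm (qsum f m) \<le> (\<Sum>j = 0..m. qnorm (f j))"
proof -
  have foldr_le: "qnorm (foldr (\<lambda>j acc. qadd (f j) acc) xs qzero) \<le> (\<Sum>j\<leftarrow>xs. qnorm (f j))" for xs
  proof (induction xs)
    case Nil
    then show ?case by (simp add: qnorm_def qzero_def)
  next
    case (Cons a xs)
    then show ?case
      using qnorm_qadd_le[of "f a" "foldr (\<lambda>j acc. qadd (f j) acc) xs qzero"] by simp
  qed
  have "qnorm (qsum f m) \<le> (\<Sum>j\<leftarrow>[0..<Suc m]. qnorm (f j))"
    unfolding qsum_def by (rule foldr_le)
  also have "\<dots> = (\<Sum>j = 0..m. qnorm (f j))"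
    by (simp only: sum_set_upt_conv_sum_list_nat[symmetric] set_upt atLeastLessThanSuc_atLeastAtMost)
  finally show ?thesis .
qed

lemma T_nonneg: "j \<le> m \<Longrightarrow> T m j \<ge> 0"
  by (simp add: T_def)

lemma sum_T_eq_1: "(\<Sum>j = 0..m. T m j) = 1"
proof -
  have "(\<Sum>j = 0..m. T m j) = 2 * (\<Sum>j = 0..m. real m - real j + 1) / ((real m + 1) * (real m + 2))"
    by (simp add: T_def sum_divide_distrib sum_distrib_left)
  also have "2 * (\<Sum>j = 0..m. real m - real j + 1) = (real m + 1) * (real m + 2)"
    using double_arith_series[of "real m + 1" "-1" m] by (simp add: algebra_simps)
  finally show ?thesis
    by simp
qed

lemma alternating_sum_closed_form:
  "(\<Sum>j = 0..m. (-1) ^ j * (real m - real j + 1)) = (real m + 1) / 2 + (if even m then 1/2 else 0)"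
proof (induction m)
  case 0
  then show ?case by simp
next
  case (Suc m)
  have "(\<Sum>j = 0..Suc m. (-1) ^ j * (real (Suc m) - real j + 1))
      = real m + 2 - (\<Sum>j = 0..m. (-1) ^ j * (real m - real j + 1))"
    by (subst sum.atLeast0_atMost_Suc_shift) (auto simp: sum_negf[symmetric] intro!: sum.cong)
  also have "\<dots> = (real (Suc m) + 1) / 2 + (if even (Suc m) then 1/2 else 0)"
    unfolding Suc.IH by (simp add: field_simps)
  finally show ?case .
qed

lemma c_ge_one_div: "c m \<ge> 1 / (real m + 2)"
proof -
  have "c m = 2 * (\<Sum>j = 0..m. (-1) ^ j * (real m - real j + 1)) / ((real m + 1) * (real m + 2))"
    by (simp add: c_def T_def sum_distrib_left sum_divide_distrib algebra_simps)
  also have "\<dots> \<ge> (real m + 1) / ((real m + 1) * (real m + 2))"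
    unfolding alternating_sum_closed_form by (intro divide_right_mono) auto
  finally show ?thesis
    by simp
qed

lemma c_pos: "c m > 0"
  using c_ge_one_div[of m] by (rule less_le_trans[rotated]) simp

lemma one_div_c_le: "1 / c m \<le> real m + 2"
  using c_ge_one_div[of m] c_pos[of m] by (simp add: field_simps)

lemma qnorm_weighted_sum_le:
  "qnorm (qsum (\<lambda>j. qscale (T n j) (qmult (qpow x (n - j)) (qpow (qconj x) j))) n) \<le> qnorm x ^ n"
proof -
  have "qnorm (qsum (\<lambda>j. qscale (T n j) (qmult (qpow x (n - j)) (qpow (qconj x) j))) n)
      \<le> (\<Sum>j = 0..n. qnorm (qscale (T n j) (qmult (qpow x (n - j)) (qpow (qconj x) j))))"
    by (rule qnorm_qsum_le)
  also have "\<dots> = (\<Sum>j = 0..n. T n j) * qnorm x ^ n"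
    by (auto simp: sum_distrib_right qnorm_qscale qnorm_qmult qnorm_qpow qnorm_qconj T_nonneg
        simp flip: power_add intro: sum.cong)
  finally show ?thesis
    by (simp add: sum_T_eq_1)
qed

lemma qnorm_P_le: "qnorm (P n x) \<le> (real n + 2) * qnorm x ^ n"
proof -
  have "qnorm (P n x) \<le> qnorm x ^ n / c n"
    using c_pos[of n] qnorm_weighted_sum_le[of n x] by (simp add: P_def qnorm_qscale divide_right_mono)
  also have "\<dots> = (1 / c n) * qnorm x ^ n"
    by simp
  also have "\<dots> \<le> (real n + 2) * qnorm x ^ n"
    by (intro mult_right_mono one_div_c_le zero_le_power qnorm_nonneg)
  finally show ?thesis .
qed

lemma n_plus_two_le_three_pow: "n \<ge> 1 \<Longrightarrow> real n + 2 \<le> 3 ^ n"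
  by (induction n rule: dec_induct) simp_all

theorem mainTheorem5:
  fixes \<rho> :: real
  assumes "\<rho> > 0"
  shows "\<exists>\<epsilon>>0. \<forall>x::quat.
           ((Re0 x)^2 + (Im1 x)^2 < \<epsilon> \<and> (Re0 x)^2 + (Im2 x)^2 < \<epsilon> \<and>
            (Re0 x)^2 + (Im3 x)^2 < \<epsilon>) \<longrightarrow>
           (\<forall>n::nat. n \<ge> 1 \<longrightarrow> qnorm (P n x) < \<rho> ^ n)"
proof (intro exI[of _ "(\<rho>/3)^2/3"] conjI allI impI)
  show "(\<rho>/3)^2/3 > 0"
    using assms by simp
  fix x :: quat and n :: nat
  assume small: "(Re0 x)^2 + (Im1 x)^2 < (\<rho>/3)^2/3 \<and> (Re0 x)^2 + (Im2 x)^2 < (\<rho>/3)^2/3 \<and>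
      (Re0 x)^2 + (Im3 x)^2 < (\<rho>/3)^2/3" and "n \<ge> 1"
  have "(qnorm x)\<^sup>2 < (\<rho>/3)\<^sup>2"
    using small by (simp add: qnorm_def) (smt (verit) zero_le_power2)
  moreover have "0 \<le> \<rho>/3"
    using assms by simp
  ultimately have "qnorm x < \<rho>/3"
    by (rule power2_less_imp_less)
  have "qnorm (P n x) \<le> (real n + 2) * qnorm x ^ n"
    by (rule qnorm_P_le)
  also have "\<dots> \<le> 3 ^ n * qnorm x ^ n"
    using \<open>n \<ge> 1\<close> by (intro mult_right_mono n_plus_two_le_three_pow) (simp_all add: qnorm_nonneg)
  also have "\<dots> < 3 ^ n * (\<rho>/3) ^ n"
    using \<open>qnorm x < \<rho>/3\<close> \<open>n \<ge> 1\<close> by (intro mult_strict_left_mono power_strict_mono) (simp_all add: qnorm_nonneg)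
  also have "\<dots> = \<rho> ^ n"
    by (simp flip: power_mult_distrib)
  finally show "qnorm (P n x) < \<rho> ^ n" .
qed

end
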